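(* Let $n$ be a positive integer divisible by $8$, let $\varepsilon>0$ and $d=1/(128\varepsilon)$. For $S\subseteq[n]$ with $|S|=n/2$, let $G_S$ be the weighted complete bipartite graph on $[n]$ with an edge between every vertex of $S$ and every vertex of $[n]\setminus S$, each of weight $2d/n$. Let $\mathcal A$ be a collection of such graphs $G_S$ such that for any two distinct $G_S,G_T\in\mathcal A$, $\frac n8<|S\cap T|<\frac{3n}8$. Then for any distinct $G_S,G_T\in\mathcal A$ and any $R\subseteq[n]$: if $\Phi_{G_S}(R)>\frac{7nd}{16}$, then $\Phi_{G_T}(R)\le\frac{6nd}{16}$.
   Context: For a weighted graph $G$ on $[n]$ and $R\subseteq[n]$, $\Phi_G(R)$ denotes the total weight of edges with exactly one endpoint in $R$ (the cut specified by $R$). *)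

theory Defs
  imports Complex_Main
begin

text \<open>A weighted graph on [n] = {1..n} is a symmetric weight function w :: nat => nat => real
  (weight 0 = no edge). The cut Phi_G(R): total weight of edges with exactly one endpoint in R.\<close>

definition cut_weight :: "nat \<Rightarrow> (nat \<Rightarrow> nat \<Rightarrow> real) \<Rightarrow> nat set \<Rightarrow> real" where
  "cut_weight n w R = (\<Sum>u\<in>{1..n} \<inter> R. \<Sum>v\<in>{1..n} - R. w u v)"

definition GS :: "nat \<Rightarrow> real \<Rightarrow> nat set \<Rightarrow> (nat \<Rightarrow> nat \<Rightarrow> real)" where
  "GS n d S = (\<lambda>u v. if u \<in> {1..n} \<and> v \<in> {1..n} \<and> ((u \<in> S \<and> v \<notin> S) \<or> (u \<notin> S \<and> v \<in> S))
                     then 2 * d / real n else 0)"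

end

theory Submission
  imports Defs
begin

text \<open>Let m = n/2 and k = |S \<inter> T|. The sets S \<inter> T, S - T, T - S and [n] - (S \<union> T) partition [n]
  into blocks of sizes k, m - k, m - k, k. If R meets them in a1, a2, a3, a4 vertices, then in
  units of 2d/n the two cuts add up to m^2 - (a1 + a2 + a3 + a4 - m)^2 + (a1 - a4)^2 + (a2 - a3)^2,
  which is at most m^2 + k^2 + (m - k)^2, and m/4 < k < 3m/4 makes this less than 13m^2/8.
  Hence \<Phi>(G_S, R) + \<Phi>(G_T, R) < 13nd/16, so \<Phi>(G_S, R) > 7nd/16 forces \<Phi>(G_T, R) < 6nd/16.\<close>

lemma cut_weight_GS:
  assumes "S \<subseteq> {1..n}" "R \<subseteq> {1..n}"
  shows "cut_weight n (GS n d S) R =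
    2 * d / real n * real (card (R \<inter> S) * card ({1..n} - S - R) + card (R - S) * card (S - R))"
proof -
  define E where "E = (R \<inter> S) \<times> ({1..n} - S - R) \<union> (R - S) \<times> (S - R)"
  have fin: "finite R" "finite S" using assms finite_subset by blast+
  have "cut_weight n (GS n d S) R = (\<Sum>(u, v) \<in> R \<times> ({1..n} - R). GS n d S u v)"
    using assms(2) by (simp add: cut_weight_def sum.cartesian_product Int_absorb1)
  also have "\<dots> = (\<Sum>p \<in> R \<times> ({1..n} - R). if p \<in> E then 2 * d / real n else 0)"
    using assms by (intro sum.cong) (auto simp: GS_def E_def split: if_split_asm)
  also have "\<dots> = 2 * d / real n * real (card E)"
  proof -
    have "E \<subseteq> R \<times> ({1..n} - R)" using assms by (auto simp: E_def)
    then show ?thesis using fin by (simp add: sum.If_cases Int_absorb1)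
  qed
  also have "card E = card (R \<inter> S) * card ({1..n} - S - R) + card (R - S) * card (S - R)"
    unfolding E_def using fin by (subst card_Un_disjoint) (auto simp: card_cartesian_product)
  finally show ?thesis .
qed

lemma cut_weight_GS_balanced:
  assumes "S \<subseteq> {1..n}" "R \<subseteq> {1..n}" "n = 2 * m" "card S = m"
  shows "cut_weight n (GS n d S) R = 2 * d / real n *
    (real (card (R \<inter> S)) * (m - real (card (R - S))) + real (card (R - S)) * (m - real (card (R \<inter> S))))"
proof -
  have "finite S" using assms(1) finite_subset by blast
  then have "card ({1..n} - S) = m" using assms by (simp add: card_Diff_subset)
  moreover have "({1..n} - S) \<inter> R = R - S" using assms(2) by blast
  ultimately have "m = card (R - S) + card ({1..n} - S - R)"
    using card_Int_Diff[of "{1..n} - S" R] by simp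
  moreover have "m = card (R \<inter> S) + card (S - R)"
    using card_Int_Diff[OF \<open>finite S\<close>, of R] assms(4) by (simp add: Int_commute)
  ultimately show ?thesis using cut_weight_GS[OF assms(1,2), of d] by simp
qed

lemma sum_of_two_cuts_le:
  fixes a\<^sub>1 a\<^sub>2 a\<^sub>3 a\<^sub>4 k m :: real
  assumes "0 \<le> a\<^sub>1" "a\<^sub>1 \<le> k" "0 \<le> a\<^sub>4" "a\<^sub>4 \<le> k" "0 \<le> a\<^sub>2" "a\<^sub>2 \<le> m - k" "0 \<le> a\<^sub>3" "a\<^sub>3 \<le> m - k"
  shows "(a\<^sub>1 + a\<^sub>2) * (m - (a\<^sub>3 + a\<^sub>4)) + (a\<^sub>3 + a\<^sub>4) * (m - (a\<^sub>1 + a\<^sub>2))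
       + ((a\<^sub>1 + a\<^sub>3) * (m - (a\<^sub>2 + a\<^sub>4)) + (a\<^sub>2 + a\<^sub>4) * (m - (a\<^sub>1 + a\<^sub>3)))
       \<le> m\<^sup>2 + k\<^sup>2 + (m - k)\<^sup>2"
proof -
  have "\<bar>a\<^sub>1 - a\<^sub>4\<bar> \<le> \<bar>k\<bar>" "\<bar>a\<^sub>2 - a\<^sub>3\<bar> \<le> \<bar>m - k\<bar>" using assms by linarith+
  then have "(a\<^sub>1 - a\<^sub>4)\<^sup>2 \<le> k\<^sup>2" "(a\<^sub>2 - a\<^sub>3)\<^sup>2 \<le> (m - k)\<^sup>2"
    by (simp_all only: abs_le_square_iff)
  moreover have "0 \<le> (a\<^sub>1 + a\<^sub>2 + a\<^sub>3 + a\<^sub>4 - m)\<^sup>2" by simp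
  moreover have "(a\<^sub>1 + a\<^sub>2) * (m - (a\<^sub>3 + a\<^sub>4)) + (a\<^sub>3 + a\<^sub>4) * (m - (a\<^sub>1 + a\<^sub>2))
       + ((a\<^sub>1 + a\<^sub>3) * (m - (a\<^sub>2 + a\<^sub>4)) + (a\<^sub>2 + a\<^sub>4) * (m - (a\<^sub>1 + a\<^sub>3)))
     = m\<^sup>2 - (a\<^sub>1 + a\<^sub>2 + a\<^sub>3 + a\<^sub>4 - m)\<^sup>2 + (a\<^sub>1 - a\<^sub>4)\<^sup>2 + (a\<^sub>2 - a\<^sub>3)\<^sup>2"
    by (simp add: algebra_simps power2_eq_square)
  ultimately show ?thesis by linarith
qed

lemma power2_add_power2_diff_lt:
  fixes k m :: real
  assumes "m / 4 < k" "k < 3 * m / 4"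
  shows "k\<^sup>2 + (m - k)\<^sup>2 < 5 / 8 * m\<^sup>2"
proof -
  have "(k - m / 4) * (k - 3 * m / 4) < 0" using assms by (intro mult_pos_neg) auto
  moreover have "k\<^sup>2 + (m - k)\<^sup>2 - 5 / 8 * m\<^sup>2 = 2 * ((k - m / 4) * (k - 3 * m / 4))"
    by (simp add: field_simps power2_eq_square)
  ultimately show ?thesis by linarith
qed

lemma cut_weight_GS_add_le:
  assumes "S \<subseteq> {1..n}" "T \<subseteq> {1..n}" "R \<subseteq> {1..n}" "n = 2 * m" "card S = m" "card T = m" "0 \<le> d"
  shows "cut_weight n (GS n d S) R + cut_weight n (GS n d T) R
    \<le> 2 * d / real n * ((real m)\<^sup>2 + (real (card (S \<inter> T)))\<^sup>2 + (real m - real (card (S \<inter> T)))\<^sup>2)"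
proof -
  define k where "k = real (card (S \<inter> T))"
  define a\<^sub>1 where "a\<^sub>1 = real (card (R \<inter> S \<inter> T))"
  define a\<^sub>2 where "a\<^sub>2 = real (card (R \<inter> S - T))"
  define a\<^sub>3 where "a\<^sub>3 = real (card (R \<inter> T - S))"
  define a\<^sub>4 where "a\<^sub>4 = real (card (R - S - T))"
  have fin: "finite R" "finite S" "finite T" using assms(1-3) finite_subset by blast+
  have "(R - S) \<inter> T = R \<inter> T - S" "R \<inter> T \<inter> S = R \<inter> S \<inter> T" "(R - T) \<inter> S = R \<inter> S - T" "R - T - S = R - S - T"
    by blast+
  then have blocks: "real (card (R \<inter> S)) = a\<^sub>1 + a\<^sub>2" "real (card (R - S)) = a\<^sub>3 + a\<^sub>4"
    "real (card (R \<inter> T)) = a\<^sub>1 + a\<^sub>3" "real (card (R - T)) = a\<^sub>2 + a\<^sub>4"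
    using fin card_Int_Diff[of "R \<inter> S" T] card_Int_Diff[of "R - S" T] card_Int_Diff[of "R \<inter> T" S]
      card_Int_Diff[of "R - T" S]
    by (simp_all add: a\<^sub>1_def a\<^sub>2_def a\<^sub>3_def a\<^sub>4_def)
  have "card (S \<union> T) + card (S \<inter> T) = 2 * m" "card (S \<union> T) \<le> n"
    using card_Un_Int[of S T] fin assms card_mono[of "{1..n}" "S \<union> T"] by auto
  then have "card ({1..n} - (S \<union> T)) = card (S \<inter> T)"
    using assms(1,2,4) fin by (simp add: card_Diff_subset)
  moreover have "card (S \<inter> T) + card (S - T) = m" "card (T \<inter> S) + card (T - S) = m"
    using card_Int_Diff fin assms(5,6) by metis+
  moreover have "card (R \<inter> S \<inter> T) \<le> card (S \<inter> T)" "card (R \<inter> S - T) \<le> card (S - T)"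
    "card (R \<inter> T - S) \<le> card (T - S)" "card (R - S - T) \<le> card ({1..n} - (S \<union> T))"
    using fin assms(3) by (auto intro!: card_mono)
  ultimately have "a\<^sub>1 \<le> k" "a\<^sub>2 \<le> m - k" "a\<^sub>3 \<le> m - k" "a\<^sub>4 \<le> k"
    by (simp_all add: k_def a\<^sub>1_def a\<^sub>2_def a\<^sub>3_def a\<^sub>4_def Int_commute)
  then have "2 * d / real n * ((a\<^sub>1 + a\<^sub>2) * (m - (a\<^sub>3 + a\<^sub>4)) + (a\<^sub>3 + a\<^sub>4) * (m - (a\<^sub>1 + a\<^sub>2))
       + ((a\<^sub>1 + a\<^sub>3) * (m - (a\<^sub>2 + a\<^sub>4)) + (a\<^sub>2 + a\<^sub>4) * (m - (a\<^sub>1 + a\<^sub>3))))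
       \<le> 2 * d / real n * ((real m)\<^sup>2 + k\<^sup>2 + (m - k)\<^sup>2)"
    using assms(7) by (intro mult_left_mono sum_of_two_cuts_le) (auto simp: a\<^sub>1_def a\<^sub>2_def a\<^sub>3_def a\<^sub>4_def)
  then show ?thesis
    using cut_weight_GS_balanced[OF assms(1,3,4,5), of d] cut_weight_GS_balanced[OF assms(2,3,4,6), of d]
    by (simp only: blocks k_def distrib_left)
qed

theorem lemma6p11:
  fixes n :: nat and \<epsilon> d :: real and \<A> :: "(nat \<Rightarrow> nat \<Rightarrow> real) set"
  assumes "n > 0" and "8 dvd n" and "\<epsilon> > 0" and "d = 1 / (128 * \<epsilon>)"
    and A_form: "\<forall>G\<in>\<A>. \<exists>S. S \<subseteq> {1..n} \<and> card S = n div 2 \<and> G = GS n d S"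
    and A_sep: "\<forall>S T. S \<subseteq> {1..n} \<and> card S = n div 2 \<and> T \<subseteq> {1..n} \<and> card T = n div 2 \<and>
                  GS n d S \<in> \<A> \<and> GS n d T \<in> \<A> \<and> GS n d S \<noteq> GS n d T \<longrightarrow>
                  real n / 8 < real (card (S \<inter> T)) \<and> real (card (S \<inter> T)) < 3 * real n / 8"
    and S: "S \<subseteq> {1..n}" "card S = n div 2" "GS n d S \<in> \<A>"
    and T: "T \<subseteq> {1..n}" "card T = n div 2" "GS n d T \<in> \<A>"
    and distinct: "GS n d S \<noteq> GS n d T"
    and R: "R \<subseteq> {1..n}"
    and big: "cut_weight n (GS n d S) R > 7 * real n * d / 16"
  shows "cut_weight n (GS n d T) R \<le> 6 * real n * d / 16"
proof -
  define m where "m = n div 2"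
  define k where "k = real (card (S \<inter> T))"
  have n_eq: "n = 2 * m" using \<open>8 dvd n\<close> by (auto simp: m_def elim!: dvdE)
  have "0 < d" using \<open>\<epsilon> > 0\<close> \<open>d = 1 / (128 * \<epsilon>)\<close> by simp
  have "real m / 4 < k" "k < 3 * real m / 4" using A_sep S T distinct n_eq by (auto simp: k_def)
  then have k_bound: "k\<^sup>2 + (m - k)\<^sup>2 < 5 / 8 * (real m)\<^sup>2" by (rule power2_add_power2_diff_lt)
  have "cut_weight n (GS n d S) R + cut_weight n (GS n d T) R \<le> 2 * d / real n * ((real m)\<^sup>2 + k\<^sup>2 + (m - k)\<^sup>2)"
    unfolding k_def using S T R n_eq \<open>0 < d\<close> by (intro cut_weight_GS_add_le) auto
  also have "\<dots> < 2 * d / real n * (13 / 8 * (real m)\<^sup>2)"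
    using k_bound \<open>0 < d\<close> \<open>n > 0\<close> by (intro mult_strict_left_mono) auto
  also have "\<dots> = 13 * real n * d / 16" using n_eq by (simp add: power2_eq_square)
  finally show ?thesis using big by linarith
qed

end
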